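(* Let $G$ be a simple graph whose vertices are among the variables of $S=\mathbb{K}[x_1,\dots,x_n]$, $\mathbb{K}$ a field. If $G$ is co-planar, i.e. the complement graph $\overline{G}$ is planar, then $\operatorname{sreg}(S/I(G))\le 3$.
   Context: $I(G)=(xy : \{x,y\}\in E(G))$ is the edge ideal. Stanley regularity: for a squarefree monomial ideal $I\subset S$, a squarefree Stanley decomposition of $S/I$ is a decomposition $S/I=\bigoplus_{i=1}^r u_i\mathbb{K}[Z_i]$ as $\mathbb{K}$-vector spaces, where $Z_i\subseteq\{x_1,\dots,x_n\}$, $u_i$ are (images of) squarefree monomials with $\operatorname{supp}(u_i)\subseteq Z_i$, and each $u_i\mathbb{K}[Z_i]$ is free over $\mathbb{K}[Z_i]$. Its Stanley regularity is $\max_i\deg(u_i)$, and $\operatorname{sreg}(S/I)$ is the minimum over all such decompositions. *)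

theory Defs
  imports "HOL-Analysis.Analysis" "HOL-Library.Poly_Mapping"
begin

text \<open>The polynomial ring S = K[x_v : v in 'v] over a field K, with a finite type 'v of
variables (so n = CARD('v)).\<close>

type_synonym ('v, 'k) mpoly = "('v \<Rightarrow>\<^sub>0 nat) \<Rightarrow>\<^sub>0 'k"

definition var :: "'v \<Rightarrow> ('v, 'k::comm_ring_1) mpoly" where
  "var v = Poly_Mapping.single (Poly_Mapping.single v 1) 1"

definition sqfree_mon :: "'v set \<Rightarrow> ('v, 'k::comm_ring_1) mpoly" where
  "sqfree_mon U = (\<Prod>v\<in>U. var v)"

definition simple_graph :: "'v set \<Rightarrow> 'v set set \<Rightarrow> bool" where
  "simple_graph V E \<longleftrightarrow> finite V \<and> (\<forall>e\<in>E. e \<subseteq> V \<and> card e = 2)"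

definition edge_ideal :: "'v set set \<Rightarrow> ('v, 'k::comm_ring_1) mpoly set" where
  "edge_ideal E = {p. \<exists>q. p = (\<Sum>e\<in>E. q e * sqfree_mon e)}"

definition subring_vars :: "'v set \<Rightarrow> ('v, 'k::comm_ring_1) mpoly set" where
  "subring_vars Z = {p :: (_, _) mpoly. \<forall>m\<in>Poly_Mapping.keys p. Poly_Mapping.keys m \<subseteq> Z}"

text \<open>A squarefree Stanley decomposition of S/I(G): a list of pairs (U_i, Z_i), where
u_i is the squarefree monomial with support U_i \<subseteq> Z_i, such that the images of the
spaces u_i K[Z_i] in S/I span S/I, their sum is direct, and each u_i K[Z_i] is free
over K[Z_i] (multiplication by u_i is injective from K[Z_i] to S/I).\<close>
definition sq_stanley_decomp ::
  "'k::field itself \<Rightarrow> 'v set set \<Rightarrow> ('v set \<times> 'v set) list \<Rightarrow> bool" where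
  "sq_stanley_decomp _ E ds \<longleftrightarrow>
     (\<forall>i<length ds. fst (ds ! i) \<subseteq> snd (ds ! i)) \<and>
     (\<forall>f :: ('v, 'k) mpoly. \<exists>g. (\<forall>i<length ds. \<exists>h\<in>subring_vars (snd (ds ! i)).
           g i = sqfree_mon (fst (ds ! i)) * h) \<and>
         f - (\<Sum>i<length ds. g i) \<in> edge_ideal E) \<and>
     (\<forall>g :: nat \<Rightarrow> ('v, 'k) mpoly. (\<forall>i<length ds. \<exists>h\<in>subring_vars (snd (ds ! i)).
           g i = sqfree_mon (fst (ds ! i)) * h) \<and>
         (\<Sum>i<length ds. g i) \<in> edge_ideal E \<longrightarrow> (\<forall>i<length ds. g i \<in> edge_ideal E)) \<and>
     (\<forall>i<length ds. \<forall>h :: ('v, 'k) mpoly. h \<in> subring_vars (snd (ds ! i)) \<and>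
         sqfree_mon (fst (ds ! i)) * h \<in> edge_ideal E \<longrightarrow> h = 0)"

definition stanley_reg :: "('v set \<times> 'v set) list \<Rightarrow> nat" where
  "stanley_reg ds = Max (insert 0 ((\<lambda>p. card (fst p)) ` set ds))"

definition sreg :: "'k::field itself \<Rightarrow> 'v set set \<Rightarrow> nat" where
  "sreg K E = (LEAST r. \<exists>ds. sq_stanley_decomp K E ds \<and> stanley_reg ds = r)"

definition complement_edges :: "'v set \<Rightarrow> 'v set set \<Rightarrow> 'v set set" where
  "complement_edges V E = {{a, b} | a b. a \<in> V \<and> b \<in> V \<and> a \<noteq> b \<and> {a, b} \<notin> E}"

definition planar :: "'v set \<Rightarrow> 'v set set \<Rightarrow> bool" where
  "planar V E \<longleftrightarrow> (\<exists>(pos :: 'v \<Rightarrow> real \<times> real) (\<gamma> :: 'v set \<Rightarrow> real \<Rightarrow> real \<times> real).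
     inj_on pos V \<and>
     (\<forall>e\<in>E. arc (\<gamma> e) \<and> {pathstart (\<gamma> e), pathfinish (\<gamma> e)} = pos ` e \<and>
              path_image (\<gamma> e) \<inter> pos ` V = pos ` e) \<and>
     (\<forall>e\<in>E. \<forall>e'\<in>E. e \<noteq> e' \<longrightarrow> path_image (\<gamma> e) \<inter> path_image (\<gamma> e') = pos ` (e \<inter> e')))"

end

theory Submission
  imports Defs "HOL-Complex_Analysis.Complex_Analysis"
begin

text \<open>The standard monomials of S/I(G) are the x^S with S independent in G. Hence a
partition of the independence complex into intervals [A, B] = {S. A \<subseteq> S \<subseteq> B} gives a
squarefree Stanley decomposition of S/I(G) into the spaces x^A K[B] (variables outside the
vertex set are added to every B), of Stanley regularity max |A|.

If the complement of G is planar it contains no K_{3,3}, so three independent vertices have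
at most two common independent neighbours. In such a complex every face has at most five
vertices, and all faces through a fixed triangle of a five-vertex face F lie in F, forming an
interval. Each remaining four-vertex face has four triangles and each triangle lies in at most
two of them, so by Hall's theorem they can be matched injectively to one of their triangles;
matched pairs are intervals of length one, and every other face is a singleton interval with at
most three vertices. The non-planarity of K_{3,3} is derived from the Jordan curve theorem via
theta graphs.\<close>

section \<open>K_{3,3} is not planar\<close>

lemma connected_subset_open_part:
  assumes "connected S" "S \<subseteq> A \<union> B" "open A" "open B" "A \<inter> B = {}" "x \<in> S" "x \<in> A"
  shows "S \<subseteq> A"
  using connectedD[OF assms(1), of A B] assms by blast

lemma arc_interior_point:
  assumes "arc p"
  obtains w where "w \<in> path_image p" "w \<noteq> pathstart p" "w \<noteq> pathfinish p"
proof
  have "p (1/2) \<noteq> p 0" "p (1/2) \<noteq> p 1"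
    using arc_imp_inj_on[OF assms] by (auto dest: inj_onD)
  then show "p (1/2) \<in> path_image p" "p (1/2) \<noteq> pathstart p" "p (1/2) \<noteq> pathfinish p"
    by (auto simp: path_image_def pathstart_def pathfinish_def)
qed

lemma arc_pathfinish_in_closure:
  assumes "arc q" "pathstart q \<in> R" "open R" "open X" "R \<inter> X = {}"
    and "path_image q - {pathfinish q} \<subseteq> R \<union> X"
  shows "pathfinish q \<in> closure R"
proof -
  let ?S = "q ` {0..<1}"
  have S: "?S = path_image q - {pathfinish q}"
  proof
    show "?S \<subseteq> path_image q - {pathfinish q}"
      using arc_imp_inj_on[OF assms(1)] by (auto simp: path_image_def pathfinish_def dest: inj_onD)
    show "path_image q - {pathfinish q} \<subseteq> ?S"
      by (auto simp: path_image_def pathfinish_def)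
        (metis atLeastLessThan_iff image_eqI less_eq_real_def)
  qed
  have cont: "continuous_on {0..1} q"
    using assms(1) arc_imp_path path_def by blast
  have "connected ?S"
    by (rule connected_continuous_image) (auto intro: continuous_on_subset[OF cont])
  moreover have "pathstart q \<in> ?S"
    by (auto simp: pathstart_def)
  ultimately have "?S \<subseteq> R"
    using connected_subset_open_part[OF _ _ assms(3,4,5)] assms(2,6) S by auto
  moreover have "q ` closure {0..<1} \<subseteq> closure ?S"
    by (rule image_closure_subset)
      (auto intro: continuous_on_subset[OF cont] closure_subset[THEN subsetD])
  then have "pathfinish q \<in> closure ?S"
    by (auto simp: pathfinish_def)
  ultimately show ?thesis
    using closure_mono by blast
qed

locale arc_loop =
  fixes p q :: "real \<Rightarrow> complex" and a b :: complex
  assumes arc_p: "arc p" and arc_q: "arc q"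
    and pathstart_p: "pathstart p = a" and pathfinish_p: "pathfinish p = b"
    and pathstart_q: "pathstart q = a" and pathfinish_q: "pathfinish q = b"
    and images_meet: "path_image p \<inter> path_image q = {a, b}"
begin

lemma swap: "arc_loop q p a b"
  using images_meet by unfold_locales (auto simp: arc_p arc_q pathstart_p pathfinish_p pathstart_q pathfinish_q)

lemma simple_closed_loop:
  "simple_path (p +++ reversepath q)" "pathfinish (p +++ reversepath q) = pathstart (p +++ reversepath q)"
  "path_image (p +++ reversepath q) = path_image p \<union> path_image q"
  using arc_p arc_q images_meet
  by (auto simp: simple_path_join_loop_eq arc_reversepath path_image_join
      pathstart_p pathfinish_p pathstart_q pathfinish_q)

lemma Jordan:
  "inside (path_image p \<union> path_image q) \<noteq> {}"
  "open (inside (path_image p \<union> path_image q))"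
  "connected (inside (path_image p \<union> path_image q))"
  "open (outside (path_image p \<union> path_image q))"
  "frontier (inside (path_image p \<union> path_image q)) = path_image p \<union> path_image q"
  "frontier (outside (path_image p \<union> path_image q)) = path_image p \<union> path_image q"
  using Jordan_inside_outside[OF simple_closed_loop(1,2)] simple_closed_loop(3) by auto

lemma closure_inside:
  "closure (inside (path_image p \<union> path_image q)) \<subseteq> inside (path_image p \<union> path_image q) \<union> path_image p \<union> path_image q"
  using Jordan(5) closure_Un_frontier by auto

lemma closure_outside:
  "closure (outside (path_image p \<union> path_image q)) \<subseteq> outside (path_image p \<union> path_image q) \<union> path_image p \<union> path_image q"
  using Jordan(6) closure_Un_frontier by auto

lemma winding_number_inside:
  assumes "z \<in> inside (path_image p \<union> path_image q)"
  shows "winding_number (p +++ reversepath q) z \<noteq> 0"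
  using simple_closed_path_norm_winding_number_inside[OF simple_closed_loop(1)] assms
    simple_closed_loop(3) by fastforce

lemma inside_if_winding_number:
  assumes "z \<notin> path_image p \<union> path_image q" "winding_number (p +++ reversepath q) z \<noteq> 0"
  shows "z \<in> inside (path_image p \<union> path_image q)"
proof -
  have "z \<notin> outside (path_image p \<union> path_image q)"
    using winding_number_zero_in_outside[of "p +++ reversepath q" z] simple_closed_loop
      simple_path_imp_path assms(2) by auto
  then show ?thesis
    using assms(1) inside_Un_outside[of "path_image p \<union> path_image q"] by blast
qed

end

text \<open>The inside of p \<union> q is connected and misses p \<union> r, so it lies in the inside of p \<union> r
as soon as they share a point; then so does the rest of its frontier, q without its ends.\<close>
lemma arc_inside_nested_loop:
  assumes pq: "arc_loop p q a b" and pr: "arc_loop p r a b"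
    and qr: "path_image q \<inter> path_image r = {a, b}"
    and z: "z \<in> inside (path_image p \<union> path_image q)" "z \<in> inside (path_image p \<union> path_image r)"
    and avoid: "inside (path_image p \<union> path_image q) \<inter> path_image r = {}"
  shows "path_image q - {a, b} \<subseteq> inside (path_image p \<union> path_image r)"
proof -
  let ?Iq = "inside (path_image p \<union> path_image q)"
  let ?Ir = "inside (path_image p \<union> path_image r)"
  have "?Iq \<subseteq> ?Ir \<union> outside (path_image p \<union> path_image r)"
    using avoid inside_no_overlap[of "path_image p \<union> path_image q"]
      inside_Un_outside[of "path_image p \<union> path_image r"] by blast
  then have "?Iq \<subseteq> ?Ir"
    using connected_subset_open_part[OF arc_loop.Jordan(3)[OF pq] _ arc_loop.Jordan(2,4)[OF pr]] z
    by auto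
  then have "path_image q \<subseteq> ?Ir \<union> path_image p \<union> path_image r"
    using arc_loop.Jordan(5)[OF pq] frontier_closures[of ?Iq] closure_mono[of ?Iq ?Ir]
      arc_loop.closure_inside[OF pr] by blast
  then show ?thesis
    using arc_loop.images_meet[OF pq] qr by blast
qed

definition arc_to :: "(real \<Rightarrow> complex) \<Rightarrow> complex \<Rightarrow> complex set \<Rightarrow> complex set \<Rightarrow> bool" where
  "arc_to q c T K \<longleftrightarrow> arc q \<and> pathstart q = c \<and> pathfinish q \<in> T \<and> path_image q \<inter> K \<subseteq> {pathfinish q}"

lemma arc_to_pathfinish_in_closure:
  assumes "arc_to q c T K" "c \<in> R" "open R" "open X" "R \<inter> X = {}" "- K \<subseteq> R \<union> X"
  shows "pathfinish q \<in> closure R"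
  using assms by (intro arc_pathfinish_in_closure[where X = X]) (auto simp: arc_to_def)

locale theta = p12: arc_loop p1 p2 a b + p13: arc_loop p1 p3 a b + p23: arc_loop p2 p3 a b
  for p1 p2 p3 a b + assumes ends_distinct: "a \<noteq> b"
begin

lemma swap23: "theta p1 p3 p2 a b"
  by (intro theta.intro p13.arc_loop_axioms p12.arc_loop_axioms p23.swap theta_axioms.intro ends_distinct)

lemma rotate: "theta p2 p3 p1 a b"
  by (intro theta.intro p23.arc_loop_axioms p12.swap p13.swap theta_axioms.intro ends_distinct)

text \<open>At a point z inside p1 \<union> p2 the winding numbers of the three loops satisfy
w13 z = w12 z + w23 z, so z is also inside p1 \<union> p3 or p2 \<union> p3, which then swallows p2
or p1 respectively.\<close>
lemma arc_meets_inside_loop: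
  "path_image p3 \<inter> inside (path_image p1 \<union> path_image p2) \<noteq> {} \<or>
   path_image p2 \<inter> inside (path_image p1 \<union> path_image p3) \<noteq> {} \<or>
   path_image p1 \<inter> inside (path_image p2 \<union> path_image p3) \<noteq> {}"
proof (rule ccontr)
  assume none: "\<not> ?thesis"
  let ?I12 = "inside (path_image p1 \<union> path_image p2)"
  obtain z where z: "z \<in> ?I12" using p12.Jordan(1) by blast
  have off: "z \<notin> path_image p1" "z \<notin> path_image p2" "z \<notin> path_image p3"
    using z none inside_no_overlap[of "path_image p1 \<union> path_image p2"] by blast+
  have "winding_number (p1 +++ reversepath p3) z =
     winding_number (p1 +++ reversepath p2) z + winding_number (p2 +++ reversepath p3) z"
    using off arc_imp_path[OF p12.arc_p] arc_imp_path[OF p12.arc_q] arc_imp_path[OF p13.arc_q]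
    by (simp add: winding_number_join winding_number_reversepath
        p12.pathstart_p p12.pathfinish_p p12.pathstart_q p12.pathfinish_q p13.pathstart_q p13.pathfinish_q)
  then have "winding_number (p1 +++ reversepath p3) z \<noteq> 0 \<or> winding_number (p2 +++ reversepath p3) z \<noteq> 0"
    using p12.winding_number_inside[OF z] by auto
  then show False
  proof
    assume "winding_number (p1 +++ reversepath p3) z \<noteq> 0"
    then have z13: "z \<in> inside (path_image p1 \<union> path_image p3)"
      using off p13.inside_if_winding_number by blast
    have "path_image p2 - {a, b} \<subseteq> inside (path_image p1 \<union> path_image p3)"
      using none by (intro arc_inside_nested_loop[OF p12.arc_loop_axioms p13.arc_loop_axioms
          p23.images_meet z z13]) blast
    moreover obtain w where "w \<in> path_image p2" "w \<noteq> a" "w \<noteq> b"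
      using arc_interior_point[OF p12.arc_q] p12.pathstart_q p12.pathfinish_q by metis
    ultimately show False
      using none by blast
  next
    assume "winding_number (p2 +++ reversepath p3) z \<noteq> 0"
    then have z23: "z \<in> inside (path_image p2 \<union> path_image p3)"
      using off p23.inside_if_winding_number by blast
    have z21: "z \<in> inside (path_image p2 \<union> path_image p1)"
      using z by (simp add: Un_commute)
    have "path_image p1 - {a, b} \<subseteq> inside (path_image p2 \<union> path_image p3)"
      using none by (intro arc_inside_nested_loop[OF p12.swap p23.arc_loop_axioms _ z21 z23])
        (auto simp: Un_commute p13.images_meet)
    moreover obtain w where "w \<in> path_image p1" "w \<noteq> a" "w \<noteq> b"
      using arc_interior_point[OF p12.arc_p] p12.pathstart_p p12.pathfinish_p by metis
    ultimately show False
      using none by blast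
  qed
qed

text \<open>The arc p3 splits the inside of the loop p1 \<union> p2 into two regions; with the outside these
are the three faces of the theta graph. Each face misses one of the three arcs, so the spoke
from c towards that arc would have to cross the theta graph.\<close>
lemma no_tripod_if_arc_inside:
  assumes inside: "path_image p3 \<inter> inside (path_image p1 \<union> path_image p2) \<noteq> {}"
    and c: "c \<notin> path_image p1 \<union> path_image p2 \<union> path_image p3"
    and q1: "arc_to q1 c (path_image p1 - {a, b}) (path_image p1 \<union> path_image p2 \<union> path_image p3)"
    and q2: "arc_to q2 c (path_image p2 - {a, b}) (path_image p1 \<union> path_image p2 \<union> path_image p3)"
    and q3: "arc_to q3 c (path_image p3 - {a, b}) (path_image p1 \<union> path_image p2 \<union> path_image p3)"
  shows False
proof -
  let ?K = "path_image p1 \<union> path_image p2 \<union> path_image p3"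
  let ?O = "outside (path_image p1 \<union> path_image p2)"
  let ?I = "inside (path_image p1 \<union> path_image p2)"
  let ?E = "inside (path_image p1 \<union> path_image p3)"
  let ?F = "inside (path_image p2 \<union> path_image p3)"
  obtain EF: "?E \<inter> ?F = {}" and EFI: "?E \<union> ?F \<union> (path_image p3 - {a, b}) = ?I"
    using split_inside_simple_closed_curve[OF arc_imp_simple_path[OF p12.arc_p] p12.pathstart_p
        p12.pathfinish_p arc_imp_simple_path[OF p12.arc_q] p12.pathstart_q p12.pathfinish_q
        arc_imp_simple_path[OF p13.arc_q] p13.pathstart_q p13.pathfinish_q ends_distinct
        p12.images_meet p13.images_meet p23.images_meet inside]
    by blast
  have OI: "?O \<inter> ?I = {}"
    using inside_Int_outside by blast
  have I_off: "?I \<inter> (path_image p1 \<union> path_image p2) = {}"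
    by (simp add: inside_no_overlap)
  have cover: "- ?K \<subseteq> ?O \<union> ?E \<union> ?F"
    using EFI inside_Un_outside[of "path_image p1 \<union> path_image p2"] by blast
  have "c \<in> ?O \<or> c \<in> ?E \<or> c \<in> ?F"
    using c cover by blast
  then show False
  proof (elim disjE)
    assume "c \<in> ?O"
    then have "pathfinish q3 \<in> closure ?O"
      using EF OI EFI cover by (intro arc_to_pathfinish_in_closure[OF q3, where X = "?E \<union> ?F"])
        (auto simp: p12.Jordan p13.Jordan p23.Jordan)
    then show False
      using p12.closure_outside q3 EFI OI p13.images_meet p23.images_meet unfolding arc_to_def by blast
  next
    assume "c \<in> ?E"
    then have "pathfinish q2 \<in> closure ?E"
      using EF OI EFI cover by (intro arc_to_pathfinish_in_closure[OF q2, where X = "?O \<union> ?F"])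
        (auto simp: p12.Jordan p13.Jordan p23.Jordan)
    then show False
      using p13.closure_inside q2 EFI I_off p12.images_meet p23.images_meet unfolding arc_to_def by blast
  next
    assume "c \<in> ?F"
    then have "pathfinish q1 \<in> closure ?F"
      using EF OI EFI cover by (intro arc_to_pathfinish_in_closure[OF q1, where X = "?O \<union> ?E"])
        (auto simp: p12.Jordan p13.Jordan p23.Jordan)
    then show False
      using p23.closure_inside q1 EFI I_off p12.images_meet p13.images_meet unfolding arc_to_def by blast
  qed
qed

lemma no_tripod:
  assumes c: "c \<notin> path_image p1 \<union> path_image p2 \<union> path_image p3"
    and q1: "arc_to q1 c (path_image p1 - {a, b}) (path_image p1 \<union> path_image p2 \<union> path_image p3)"
    and q2: "arc_to q2 c (path_image p2 - {a, b}) (path_image p1 \<union> path_image p2 \<union> path_image p3)"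
    and q3: "arc_to q3 c (path_image p3 - {a, b}) (path_image p1 \<union> path_image p2 \<union> path_image p3)"
  shows False
proof -
  have K: "path_image p1 \<union> path_image p3 \<union> path_image p2 = path_image p1 \<union> path_image p2 \<union> path_image p3"
    "path_image p2 \<union> path_image p3 \<union> path_image p1 = path_image p1 \<union> path_image p2 \<union> path_image p3"
    by auto
  from arc_meets_inside_loop show False
  proof (elim disjE)
    assume "path_image p3 \<inter> inside (path_image p1 \<union> path_image p2) \<noteq> {}"
    then show False
      using no_tripod_if_arc_inside c q1 q2 q3 by blast
  next
    assume "path_image p2 \<inter> inside (path_image p1 \<union> path_image p3) \<noteq> {}"
    then show False
      using theta.no_tripod_if_arc_inside[OF swap23, of c q1 q3 q2] c q1 q2 q3 unfolding K by blast
  next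
    assume "path_image p1 \<inter> inside (path_image p2 \<union> path_image p3) \<noteq> {}"
    then show False
      using theta.no_tripod_if_arc_inside[OF rotate, of c q2 q3 q1] c q1 q2 q3 unfolding K by blast
  qed
qed

end

text \<open>Joining the arcs from A 0 and A 1 at each B j gives a theta graph, which A 2 would reach
through all three of its arcs.\<close>
lemma no_plane_drawing_K33:
  fixes A B :: "nat \<Rightarrow> complex" and g :: "nat \<Rightarrow> nat \<Rightarrow> real \<Rightarrow> complex"
  assumes arc: "\<And>i j. i < 3 \<Longrightarrow> j < 3 \<Longrightarrow> arc (g i j)"
    and starts: "\<And>i j. i < 3 \<Longrightarrow> j < 3 \<Longrightarrow> pathstart (g i j) = A i"
    and finishes: "\<And>i j. i < 3 \<Longrightarrow> j < 3 \<Longrightarrow> pathfinish (g i j) = B j"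
    and meet: "\<And>i j i' j'. i < 3 \<Longrightarrow> j < 3 \<Longrightarrow> i' < 3 \<Longrightarrow> j' < 3 \<Longrightarrow> (i, j) \<noteq> (i', j') \<Longrightarrow>
       path_image (g i j) \<inter> path_image (g i' j') = (if i = i' then {A i} else {}) \<union> (if j = j' then {B j} else {})"
    and avoid: "\<And>i j k. i < 3 \<Longrightarrow> j < 3 \<Longrightarrow> k < 3 \<Longrightarrow> k \<noteq> i \<Longrightarrow> A k \<notin> path_image (g i j)"
  shows False
proof -
  define p where "p j = g 0 j +++ reversepath (g 1 j)" for j
  have ends_in: "A i \<in> path_image (g i j)" "B j \<in> path_image (g i j)" if "i < 3" "j < 3" for i j
    using starts[OF that] finishes[OF that] pathstart_in_path_image[of "g i j"]
      pathfinish_in_path_image[of "g i j"] by auto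
  have A_ne_B: "A i \<noteq> B j" if "i < 3" "j < 3" for i j
    using avoid[of 1 j i] avoid[of 0 j i] ends_in[of 1 j] ends_in[of 0 j] that by (cases "i = 0") auto
  have p_image: "path_image (p j) = path_image (g 0 j) \<union> path_image (g 1 j)" if "j < 3" for j
    using finishes that by (simp add: p_def path_image_join)
  have p_arc: "arc (p j)" if "j < 3" for j
    unfolding p_def
  proof (rule arc_join)
    show "arc (g 0 j)" "arc (reversepath (g 1 j))"
      using arc that by (auto simp: arc_reversepath)
    show "pathfinish (g 0 j) = pathstart (reversepath (g 1 j))"
      using finishes that by simp
    show "path_image (g 0 j) \<inter> path_image (reversepath (g 1 j)) \<subseteq> {pathstart (reversepath (g 1 j))}"
      using meet[of 0 j 1 j] finishes[of 1 j] that by simp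
  qed
  have p_loop: "arc_loop (p j) (p k) (A 0) (A 1)" if "j < 3" "k < 3" "j \<noteq> k" for j k
  proof
    show "arc (p j)" "arc (p k)"
      using p_arc that by auto
    show "pathstart (p j) = A 0" "pathfinish (p j) = A 1" "pathstart (p k) = A 0" "pathfinish (p k) = A 1"
      using starts that by (auto simp: p_def)
    show "path_image (p j) \<inter> path_image (p k) = {A 0, A 1}"
      using meet[of 0 j 0 k] meet[of 0 j 1 k] meet[of 1 j 0 k] meet[of 1 j 1 k] p_image that by auto
  qed
  interpret theta "p 0" "p 1" "p 2" "A 0" "A 1"
    using p_loop avoid[of 1 0 0] ends_in[of 1 0]
    by (intro theta.intro theta_axioms.intro) auto
  let ?K = "path_image (p 0) \<union> path_image (p 1) \<union> path_image (p 2)"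
  have spoke: "arc_to (g 2 j) (A 2) (path_image (p j) - {A 0, A 1}) ?K" if "j < 3" for j
  proof -
    have meets: "path_image (g 2 j) \<inter> path_image (g i k) \<subseteq> {B j}" if "i < 2" "k < 3" for i k
      using meet[of 2 j i k] that \<open>j < 3\<close> by auto
    have "path_image (g 2 j) \<inter> ?K \<subseteq> {B j}"
      using p_image[of 0] p_image[of 1] p_image[of 2] meets[of 0 0] meets[of 0 1] meets[of 0 2]
        meets[of 1 0] meets[of 1 1] meets[of 1 2] by auto
    moreover have "B j \<in> path_image (p j) - {A 0, A 1}"
      using p_image[OF that] ends_in[of 0 j] A_ne_B[of 0 j] A_ne_B[of 1 j] that by auto
    ultimately show ?thesis
      using arc starts finishes that by (simp add: arc_to_def)
  qed
  show False
    using no_tripod[OF _ spoke spoke spoke] p_image avoid[of 0 _ 2] avoid[of 1 _ 2] by auto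
qed

text \<open>Planarity is defined by drawings in real \<times> real, whereas the Jordan curve theorem is
available for complex paths.\<close>
definition complex_of_pair :: "real \<times> real \<Rightarrow> complex" where
  "complex_of_pair z = Complex (fst z) (snd z)"

lemma linear_complex_of_pair: "linear complex_of_pair"
  by (rule linearI) (auto simp: complex_of_pair_def complex_eq_iff scaleR_prod_def)

lemma inj_complex_of_pair: "inj complex_of_pair"
  by (rule injI) (auto simp: complex_of_pair_def complex_eq_iff prod_eq_iff)

lemma planar_complex_drawing:
  assumes "planar V H"
  obtains pos :: "'a \<Rightarrow> complex" and \<gamma> :: "'a set \<Rightarrow> real \<Rightarrow> complex"
  where "inj_on pos V"
    and "\<And>e. e \<in> H \<Longrightarrow> arc (\<gamma> e) \<and> {pathstart (\<gamma> e), pathfinish (\<gamma> e)} = pos ` e \<and>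
                         path_image (\<gamma> e) \<inter> pos ` V = pos ` e"
    and "\<And>e e'. e \<in> H \<Longrightarrow> e' \<in> H \<Longrightarrow> e \<noteq> e' \<Longrightarrow>
                path_image (\<gamma> e) \<inter> path_image (\<gamma> e') = pos ` (e \<inter> e')"
proof -
  obtain pos :: "'a \<Rightarrow> real \<times> real" and \<gamma> :: "'a set \<Rightarrow> real \<Rightarrow> real \<times> real" where
    drawing: "inj_on pos V \<and>
     (\<forall>e\<in>H. arc (\<gamma> e) \<and> {pathstart (\<gamma> e), pathfinish (\<gamma> e)} = pos ` e \<and>
              path_image (\<gamma> e) \<inter> pos ` V = pos ` e) \<and>
     (\<forall>e\<in>H. \<forall>e'\<in>H. e \<noteq> e' \<longrightarrow> path_image (\<gamma> e) \<inter> path_image (\<gamma> e') = pos ` (e \<inter> e'))"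
    using assms unfolding planar_def by (elim exE) (rule that)
  let ?c = complex_of_pair
  have image_inter: "?c ` A \<inter> ?c ` B = ?c ` (A \<inter> B)" for A B
    by (simp add: image_Int[OF inj_complex_of_pair])
  show thesis
  proof
    show "inj_on (?c \<circ> pos) V"
      using drawing inj_complex_of_pair by (simp add: comp_inj_on inj_on_subset)
  next
    fix e assume e: "e \<in> H"
    have "arc (?c \<circ> \<gamma> e)"
      using drawing e arc_linear_image_eq[OF linear_complex_of_pair inj_complex_of_pair] by simp
    moreover have "{pathstart (\<gamma> e), pathfinish (\<gamma> e)} = pos ` e"
      using drawing e by blast
    then have "?c ` {pathstart (\<gamma> e), pathfinish (\<gamma> e)} = ?c ` pos ` e"
      by (rule arg_cong)
    then have "{pathstart (?c \<circ> \<gamma> e), pathfinish (?c \<circ> \<gamma> e)} = (?c \<circ> pos) ` e"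
      by (simp only: pathstart_compose pathfinish_compose image_comp[symmetric] image_insert image_empty)
    moreover have "path_image (\<gamma> e) \<inter> pos ` V = pos ` e"
      using drawing e by blast
    then have "path_image (?c \<circ> \<gamma> e) \<inter> (?c \<circ> pos) ` V = (?c \<circ> pos) ` e"
      by (simp only: path_image_compose image_comp[symmetric] image_inter)
    ultimately show "arc (?c \<circ> \<gamma> e) \<and> {pathstart (?c \<circ> \<gamma> e), pathfinish (?c \<circ> \<gamma> e)} = (?c \<circ> pos) ` e \<and>
        path_image (?c \<circ> \<gamma> e) \<inter> (?c \<circ> pos) ` V = (?c \<circ> pos) ` e"
      by blast
  next
    fix e e' assume "e \<in> H" "e' \<in> H" "e \<noteq> e'"
    then have "path_image (\<gamma> e) \<inter> path_image (\<gamma> e') = pos ` (e \<inter> e')"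
      using drawing by blast
    then show "path_image (?c \<circ> \<gamma> e) \<inter> path_image (?c \<circ> \<gamma> e') = (?c \<circ> pos) ` (e \<inter> e')"
      by (simp only: path_image_compose image_comp[symmetric] image_inter)
  qed
qed

lemma planar_no_K33:
  fixes V :: "'a set"
  assumes planar: "planar V H"
    and X: "X \<subseteq> V" "card X = 3" and Y: "Y \<subseteq> V" "card Y = 3" and disjoint: "X \<inter> Y = {}"
    and edges: "\<And>x y. x \<in> X \<Longrightarrow> y \<in> Y \<Longrightarrow> {x, y} \<in> H"
  shows False
proof -
  obtain pos :: "'a \<Rightarrow> complex" and \<gamma> :: "'a set \<Rightarrow> real \<Rightarrow> complex" where
    pos: "inj_on pos V"
    and \<gamma>: "\<And>e. e \<in> H \<Longrightarrow> arc (\<gamma> e) \<and> {pathstart (\<gamma> e), pathfinish (\<gamma> e)} = pos ` e \<and>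
                         path_image (\<gamma> e) \<inter> pos ` V = pos ` e"
    and \<gamma>_meet: "\<And>e e'. e \<in> H \<Longrightarrow> e' \<in> H \<Longrightarrow> e \<noteq> e' \<Longrightarrow>
                path_image (\<gamma> e) \<inter> path_image (\<gamma> e') = pos ` (e \<inter> e')"
    using planar_complex_drawing[OF planar] by blast
  have "finite X" "finite Y"
    using X(2) Y(2) by (auto intro: card_ge_0_finite)
  then obtain x y :: "nat \<Rightarrow> 'a" where x: "bij_betw x {0..<3} X" and y: "bij_betw y {0..<3} Y"
    using ex_bij_betw_nat_finite[of X] ex_bij_betw_nat_finite[of Y] unfolding X(2) Y(2) by blast
  have x_inj: "inj_on x {0..<3}" and y_inj: "inj_on y {0..<3}"
    using x y by (simp_all add: bij_betw_imp_inj_on)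
  have xX: "x i \<in> X" and yY: "y i \<in> Y" if "i < 3" for i
    using bij_betw_apply[OF x] bij_betw_apply[OF y] that by simp_all
  have x_ne_y: "x i \<noteq> y j" if "i < 3" "j < 3" for i j
    using xX[OF that(1)] yY[OF that(2)] disjoint by auto
  have edge: "{x i, y j} \<in> H" if "i < 3" "j < 3" for i j
    by (rule edges[OF xX[OF that(1)] yY[OF that(2)]])
  define g where "g i j = (let h = \<gamma> {x i, y j} in if pathstart h = pos (x i) then h else reversepath h)"
    for i j
  have g: "arc (g i j) \<and> pathstart (g i j) = pos (x i) \<and> pathfinish (g i j) = pos (y j) \<and>
      path_image (g i j) = path_image (\<gamma> {x i, y j})" if "i < 3" "j < 3" for i j
  proof -
    have "pathstart (\<gamma> {x i, y j}) \<noteq> pathfinish (\<gamma> {x i, y j})"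
      using \<gamma>[OF edge[OF that]] by (auto simp: arc_simple_path)
    then show ?thesis
      using \<gamma>[OF edge[OF that]] by (auto simp: g_def Let_def arc_reversepath doubleton_eq_iff)
  qed
  show False
  proof (rule no_plane_drawing_K33[of g "pos \<circ> x" "pos \<circ> y"])
    show "arc (g i j)" "pathstart (g i j) = (pos \<circ> x) i" "pathfinish (g i j) = (pos \<circ> y) j"
      if "i < 3" "j < 3" for i j
      using g[OF that] by auto
    show "path_image (g i j) \<inter> path_image (g i' j') =
        (if i = i' then {(pos \<circ> x) i} else {}) \<union> (if j = j' then {(pos \<circ> y) j} else {})"
      if "i < 3" "j < 3" "i' < 3" "j' < 3" "(i, j) \<noteq> (i', j')" for i j i' j'
    proof -
      have ne: "{x i, y j} \<noteq> {x i', y j'}"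
        using that x_ne_y x_inj y_inj by (auto simp: doubleton_eq_iff inj_on_def)
      have "path_image (g i j) \<inter> path_image (g i' j') = pos ` ({x i, y j} \<inter> {x i', y j'})"
        using g[OF that(1,2)] g[OF that(3,4)] \<gamma>_meet[OF edge[OF that(1,2)] edge[OF that(3,4)] ne] by simp
      also have "{x i, y j} \<inter> {x i', y j'} = (if i = i' then {x i} else {}) \<union> (if j = j' then {y j} else {})"
        using that x_ne_y x_inj y_inj by (auto simp: inj_on_def)
      finally show ?thesis
        by simp
    qed
    show "(pos \<circ> x) k \<notin> path_image (g i j)" if "i < 3" "j < 3" "k < 3" "k \<noteq> i" for i j k
    proof
      assume "(pos \<circ> x) k \<in> path_image (g i j)"
      then have "pos (x k) \<in> pos ` {x i, y j}"
        using g[OF that(1,2)] \<gamma>[OF edge[OF that(1,2)]] xX[OF that(3)] X(1) by auto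
      moreover have "x k \<in> V" "x i \<in> V" "y j \<in> V"
        using xX yY X(1) Y(1) that by auto
      ultimately have "x k = x i \<or> x k = y j"
        using inj_onD[OF pos] by auto
      then show False
        using that x_inj x_ne_y by (auto simp: inj_on_def)
    qed
  qed
qed

section \<open>Hall's marriage theorem\<close>

lemma hall_condition_delete:
  fixes N :: "'a \<Rightarrow> 'b set"
  assumes L: "finite L" "\<forall>l\<in>L. finite (N l)"
    and surplus: "\<forall>S\<subseteq>L. S \<noteq> {} \<and> S \<noteq> L \<longrightarrow> card S < card (\<Union>(N ` S))"
    and l: "l \<in> L"
  shows "\<forall>S\<subseteq>L - {l}. card S \<le> card (\<Union>((\<lambda>x. N x - {r}) ` S))"
proof (intro allI impI)
  fix S assume S: "S \<subseteq> L - {l}"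
  show "card S \<le> card (\<Union>((\<lambda>x. N x - {r}) ` S))"
  proof (cases "S = {}")
    case False
    then have "card S < card (\<Union>(N ` S))"
      using surplus S l by blast
    moreover have "finite (\<Union>(N ` S))"
      using L S finite_subset by (meson Diff_subset finite_UN_I subset_eq)
    moreover have "\<Union>((\<lambda>x. N x - {r}) ` S) = \<Union>(N ` S) - {r}"
      by auto
    ultimately show ?thesis
      by (auto simp: card_Diff_singleton_if)
  qed simp
qed

lemma hall_condition_contract:
  fixes N :: "'a \<Rightarrow> 'b set"
  assumes L: "finite L" "\<forall>l\<in>L. finite (N l)"
    and hall: "\<forall>S\<subseteq>L. card S \<le> card (\<Union>(N ` S))"
    and S0: "S0 \<subseteq> L" "card (\<Union>(N ` S0)) = card S0"
  shows "\<forall>S\<subseteq>L - S0. card S \<le> card (\<Union>((\<lambda>x. N x - \<Union>(N ` S0)) ` S))"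
proof (intro allI impI)
  fix S assume S: "S \<subseteq> L - S0"
  have fin_S: "finite S" "finite S0"
    using S S0(1) L(1) by (auto intro: finite_subset)
  have finite_U: "finite (\<Union>(N ` (S \<union> S0)))"
    using fin_S L(2) S S0(1) by (intro finite_UN_I) auto
  have "\<Union>((\<lambda>x. N x - \<Union>(N ` S0)) ` S) = \<Union>(N ` (S \<union> S0)) - \<Union>(N ` S0)"
    by auto
  then have "card (\<Union>((\<lambda>x. N x - \<Union>(N ` S0)) ` S)) = card (\<Union>(N ` (S \<union> S0))) - card (\<Union>(N ` S0))"
    using fin_S finite_U by (simp add: card_Diff_subset finite_subset)
  moreover have "S \<union> S0 \<subseteq> L"
    using S S0(1) by auto
  then have "card (S \<union> S0) \<le> card (\<Union>(N ` (S \<union> S0)))"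
    using hall by blast
  moreover have "card (S \<union> S0) = card S + card S0"
    using fin_S S by (intro card_Un_disjoint) auto
  ultimately show "card S \<le> card (\<Union>((\<lambda>x. N x - \<Union>(N ` S0)) ` S))"
    using S0(2) by linarith
qed

theorem hall_marriage:
  fixes N :: "'a \<Rightarrow> 'b set"
  assumes "finite L" "\<forall>l\<in>L. finite (N l)" "\<forall>S\<subseteq>L. card S \<le> card (\<Union>(N ` S))"
  shows "\<exists>f. inj_on f L \<and> (\<forall>l\<in>L. f l \<in> N l)"
  using assms
proof (induction "card L" arbitrary: L N rule: less_induct)
  case less
  note L = less.prems(1,2) and hall = less.prems(3)
  show ?case
  proof (cases "\<forall>S\<subseteq>L. S \<noteq> {} \<and> S \<noteq> L \<longrightarrow> card S < card (\<Union>(N ` S))")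
    case surplus: True
    show ?thesis
    proof (cases "L = {}")
      case False
      then obtain l where l: "l \<in> L"
        by blast
      then have "card {l} \<le> card (N l)"
        using hall[rule_format, of "{l}"] by simp
      then obtain r where r: "r \<in> N l"
        by fastforce
      have "card (L - {l}) < card L"
        using L(1) l by (rule card_Diff1_less)
      moreover have "finite (L - {l})" "\<forall>x\<in>L - {l}. finite (N x - {r})"
        using L by auto
      ultimately obtain f where f: "inj_on f (L - {l})" "\<forall>x\<in>L - {l}. f x \<in> N x - {r}"
        using less.hyps[OF _ _ _ hall_condition_delete[OF L surplus l, of r]] by blast
      have "inj_on (f(l := r)) L"
        using f l by (auto simp: inj_on_def)
      then show ?thesis
        using f r by (intro exI[of _ "f(l := r)"]) auto
    qed simp
  next
    case False
    then obtain S0 where S0: "S0 \<subseteq> L" "S0 \<noteq> {}" "S0 \<noteq> L" "\<not> card S0 < card (\<Union>(N ` S0))"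
      by blast
    have critical: "card (\<Union>(N ` S0)) = card S0"
      using hall[rule_format, OF S0(1)] S0(4) by linarith
    have fin0: "finite S0" "\<forall>l\<in>S0. finite (N l)"
      using S0(1) L by (auto intro: finite_subset)
    have "card S0 < card L"
      using S0 L by (simp add: psubset_card_mono psubsetI)
    moreover have "\<forall>S\<subseteq>S0. card S \<le> card (\<Union>(N ` S))"
      using hall S0(1) by blast
    ultimately obtain f1 where f1: "inj_on f1 S0" "\<forall>x\<in>S0. f1 x \<in> N x"
      using less.hyps[OF _ fin0] by blast
    have "card (L - S0) < card L"
      using S0 L(1) by (intro psubset_card_mono) auto
    moreover have "finite (L - S0)" "\<forall>x\<in>L - S0. finite (N x - \<Union>(N ` S0))"
      using L by auto
    ultimately obtain f2 where f2: "inj_on f2 (L - S0)" "\<forall>x\<in>L - S0. f2 x \<in> N x - \<Union>(N ` S0)"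
      using less.hyps[OF _ _ _ hall_condition_contract[OF L hall S0(1) critical]] by blast
    define f where "f x = (if x \<in> S0 then f1 x else f2 x)" for x
    have "inj_on f S0" "inj_on f (L - S0)"
      using f1(1) f2(1) by (auto simp: f_def inj_on_def)
    moreover have "f ` S0 \<inter> f ` (L - S0) = {}"
      using f1(2) f2(2) by (fastforce simp: f_def)
    moreover have "S0 - (L - S0) = S0" "(L - S0) - S0 = L - S0"
      by auto
    ultimately have "inj_on f (S0 \<union> (L - S0))"
      by (simp only: inj_on_Un)
    moreover have "\<forall>l\<in>L. f l \<in> N l"
      using f1 f2 by (auto simp: f_def)
    moreover have "S0 \<union> (L - S0) = L"
      using S0(1) by blast
    ultimately show ?thesis
      by auto
  qed
qed

corollary hall_marriage_degrees:
  fixes N :: "'a \<Rightarrow> 'b set"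
  assumes L: "finite L" "\<forall>l\<in>L. finite (N l)"
    and left: "\<forall>l\<in>L. a \<le> card (N l)" and right: "\<forall>r. card {l\<in>L. r \<in> N l} \<le> b"
    and "b \<le> a" "0 < a"
  shows "\<exists>f. inj_on f L \<and> (\<forall>l\<in>L. f l \<in> N l)"
proof (rule hall_marriage[OF L], intro allI impI)
  fix S assume S: "S \<subseteq> L"
  let ?U = "\<Union>(N ` S)"
  have fin: "finite S" "finite ?U"
    using S L by (auto intro: finite_subset)
  have "card S * a \<le> (\<Sum>l\<in>S. card (N l))"
    using sum_bounded_below[of S a "\<lambda>l. card (N l)"] left S by auto
  also have "\<dots> = (\<Sum>l\<in>S. card (?U \<inter> N l))"
    by (intro sum.cong refl arg_cong[where f = card]) auto
  also have "\<dots> = (\<Sum>l\<in>S. \<Sum>r\<in>?U. if r \<in> N l then 1 else 0)"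
    using fin by (simp add: sum.If_cases Int_def)
  also have "\<dots> = (\<Sum>r\<in>?U. \<Sum>l\<in>S. if r \<in> N l then 1 else 0)"
    by (rule sum.swap)
  also have "\<dots> = (\<Sum>r\<in>?U. card {l\<in>S. r \<in> N l})"
    using fin by (simp add: sum.If_cases Int_def)
  also have "\<dots> \<le> (\<Sum>r\<in>?U. b)"
  proof (rule sum_mono)
    fix r
    have "card {l\<in>S. r \<in> N l} \<le> card {l\<in>L. r \<in> N l}"
      using S L(1) by (intro card_mono) auto
    then show "card {l\<in>S. r \<in> N l} \<le> b"
      using right by (meson le_trans)
  qed
  also have "\<dots> \<le> card ?U * a"
    using \<open>b \<le> a\<close> by simp
  finally show "card S \<le> card ?U"
    using \<open>0 < a\<close> by simp
qed

section \<open>Interval partitions of simplicial complexes\<close>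

definition interval :: "'a set \<times> 'a set \<Rightarrow> 'a set set" where
  "interval I = {S. fst I \<subseteq> S \<and> S \<subseteq> snd I}"

definition interval_partition :: "('a set \<Rightarrow> bool) \<Rightarrow> ('a set \<times> 'a set) set \<Rightarrow> bool" where
  "interval_partition \<Delta> P \<longleftrightarrow>
     (\<forall>I\<in>P. fst I \<subseteq> snd I \<and> \<Delta> (snd I)) \<and> (\<forall>S. \<Delta> S \<longrightarrow> (\<exists>!I\<in>P. S \<in> interval I))"

lemma interval_partition_image:
  assumes selects: "\<And>S. \<Delta> S \<Longrightarrow> S \<in> interval (\<phi> S) \<and> \<Delta> (snd (\<phi> S))"
    and constant_on: "\<And>S S'. \<Delta> S \<Longrightarrow> S' \<in> interval (\<phi> S) \<Longrightarrow> \<phi> S' = \<phi> S"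
  shows "interval_partition \<Delta> (\<phi> ` {S. \<Delta> S})"
  unfolding interval_partition_def
proof (rule conjI; intro ballI allI impI)
  fix I assume "I \<in> \<phi> ` {S. \<Delta> S}"
  then show "fst I \<subseteq> snd I \<and> \<Delta> (snd I)"
    using selects by (fastforce simp: interval_def)
next
  fix S assume S: "\<Delta> S"
  have "I = \<phi> S" if "I \<in> \<phi> ` {S. \<Delta> S}" "S \<in> interval I" for I
    using that constant_on by force
  then show "\<exists>!I\<in>\<phi> ` {S. \<Delta> S}. S \<in> interval I"
    using S selects by (intro ex1I[of _ "\<phi> S"]) auto
qed

lemma subset_between_card_Suc:
  assumes "A \<subseteq> B" "B \<subseteq> C" "finite C" "card C = Suc (card A)"
  shows "B = A \<or> B = C"
proof (cases "B = C")
  case False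
  then have "card B < card C"
    using assms(2,3) by (intro psubset_card_mono) auto
  moreover have "card A \<le> card B"
    using assms by (meson card_mono finite_subset)
  ultimately show ?thesis
    using assms card_subset_eq[of B A] finite_subset by (metis le_antisym less_Suc_eq_le)
qed simp

text \<open>A simplicial complex on a finite vertex set in which every triangle lies in at most two
tetrahedra. The independence complex of a graph whose complement has no K_{3,3} is of this kind.\<close>
locale two_apex_complex =
  fixes face :: "'a::finite set \<Rightarrow> bool"
  assumes face_subset: "\<And>A B. face B \<Longrightarrow> A \<subseteq> B \<Longrightarrow> face A"
    and apexes_le_2: "\<And>T. face T \<Longrightarrow> card T = 3 \<Longrightarrow> card {x. x \<notin> T \<and> face (insert x T)} \<le> 2"
begin

lemma card_le_2_if_extends:
  assumes "face T" "card T = 3" "\<And>x. x \<in> X \<Longrightarrow> x \<notin> T \<and> face (insert x T)"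
  shows "card X \<le> 2"
  using apexes_le_2[OF assms(1,2)] card_mono[of "{x. x \<notin> T \<and> face (insert x T)}" X] assms(3)
  by fastforce

lemma card_face_le_5:
  assumes "face B"
  shows "card B \<le> 5"
proof (rule ccontr)
  assume "\<not> card B \<le> 5"
  then have "3 \<le> card B"
    by linarith
  then obtain T where T: "T \<subseteq> B" "card T = 3"
    by (meson obtain_subset_with_card_n)
  have "card (B - T) \<le> 2"
    using face_subset[OF assms] T by (intro card_le_2_if_extends[of T]) auto
  moreover have "card (B - T) = card B - 3"
    using T by (simp add: card_Diff_subset)
  ultimately show False
    using \<open>\<not> card B \<le> 5\<close> by linarith
qed

text \<open>A triangle of a five-vertex face F already has both of its apexes in F, so every face
through that triangle lies in F.\<close>
lemma face_subset_five_face: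
  assumes F: "face F" "card F = 5" and T: "T \<subseteq> F" "card T = 3" and Q: "face Q" "T \<subseteq> Q"
  shows "Q \<subseteq> F"
proof (rule ccontr)
  assume "\<not> Q \<subseteq> F"
  then obtain y where y: "y \<in> Q" "y \<notin> F"
    by blast
  have "card (insert y (F - T)) \<le> 2"
    using face_subset F T Q y by (intro card_le_2_if_extends[of T]) (auto intro: face_subset)
  moreover have "card (insert y (F - T)) = 3"
    using y F T by (simp add: card_Diff_subset)
  ultimately show False
    by simp
qed

lemma card_tetrahedra_through_le_2:
  assumes "face T" "card T = 3"
  shows "card {Q. face Q \<and> card Q = 4 \<and> T \<subseteq> Q} \<le> 2"
proof -
  have "{Q. face Q \<and> card Q = 4 \<and> T \<subseteq> Q} \<subseteq> (\<lambda>x. insert x T) ` {x. x \<notin> T \<and> face (insert x T)}"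
  proof
    fix Q assume Q: "Q \<in> {Q. face Q \<and> card Q = 4 \<and> T \<subseteq> Q}"
    then have "card (Q - T) = 1"
      using assms by (simp add: card_Diff_subset)
    then obtain x where "Q - T = {x}"
      by (auto simp: card_Suc_eq)
    then have "Q = insert x T" "x \<notin> T"
      using Q by auto
    then show "Q \<in> (\<lambda>x. insert x T) ` {x. x \<notin> T \<and> face (insert x T)}"
      using Q by blast
  qed
  then have "card {Q. face Q \<and> card Q = 4 \<and> T \<subseteq> Q} \<le> card {x. x \<notin> T \<and> face (insert x T)}"
    by (meson card_image_le card_mono finite order_trans)
  then show ?thesis
    using apexes_le_2[OF assms] by linarith
qed

definition triangles :: "'a set \<Rightarrow> 'a set set" where
  "triangles Q = {T. T \<subseteq> Q \<and> card T = 3}"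

lemma card_triangles:
  assumes "card Q = 4"
  shows "card (triangles Q) = 4"
proof -
  have "(4::nat) choose 3 = 4"
    by (simp add: numeral_eq_Suc)
  then show ?thesis
    using n_subsets[OF finite, of Q 3] assms by (simp add: triangles_def)
qed

definition five_face :: "'a set \<Rightarrow> bool" where
  "five_face F \<longleftrightarrow> face F \<and> card F = 5"

text \<open>The faces of a five-vertex face F through a fixed triangle of F form the interval
[base F, F] of the partition.\<close>
definition base :: "'a set \<Rightarrow> 'a set" where
  "base F = (SOME T. T \<subseteq> F \<and> card T = 3)"

definition in_five_interval :: "'a set \<Rightarrow> bool" where
  "in_five_interval B \<longleftrightarrow> (\<exists>F. five_face F \<and> B \<in> interval (base F, F))"

definition five_face_of :: "'a set \<Rightarrow> 'a set" where
  "five_face_of B = (SOME F. five_face F \<and> B \<in> interval (base F, F))"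

lemma base_subset:
  assumes "five_face F"
  shows "base F \<subseteq> F \<and> card (base F) = 3"
proof -
  obtain T where "T \<subseteq> F" "card T = 3"
    using assms obtain_subset_with_card_n[of 3 F] by (auto simp: five_face_def)
  then show ?thesis
    unfolding base_def by (rule someI[where P = "\<lambda>T. T \<subseteq> F \<and> card T = 3", OF conjI])
qed

lemma five_face_of:
  assumes "in_five_interval B"
  shows "five_face (five_face_of B) \<and> B \<in> interval (base (five_face_of B), five_face_of B)"
  using assms unfolding in_five_interval_def five_face_of_def by (rule someI_ex)

lemma five_face_of_eq:
  assumes F: "five_face F" and B: "B \<in> interval (base F, F)"
  shows "five_face_of B = F"
proof -
  have "in_five_interval B"
    using F B by (auto simp: in_five_interval_def)
  then obtain F' where F': "five_face F'" "B \<in> interval (base F', F')" "five_face_of B = F'"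
    using five_face_of by blast
  then have "base F' \<subseteq> F"
    using B by (auto simp: interval_def)
  then have "F \<subseteq> F'"
    using face_subset_five_face[of F' "base F'" F] base_subset[OF F'(1)] F F'(1)
    by (auto simp: five_face_def)
  then show ?thesis
    using F F'(1,3) card_subset_eq[OF finite, of F F'] by (simp add: five_face_def)
qed

definition free_tetrahedra :: "'a set set" where
  "free_tetrahedra = {Q. face Q \<and> card Q = 4 \<and> \<not> in_five_interval Q}"

lemma triangle_of_free_tetrahedron:
  assumes Q: "Q \<in> free_tetrahedra" and T: "T \<in> triangles Q"
  shows "face T \<and> card T = 3 \<and> \<not> in_five_interval T"
proof (intro conjI notI)
  show "face T" "card T = 3"
    using Q T face_subset by (auto simp: free_tetrahedra_def triangles_def)
next
  assume "in_five_interval T"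
  then obtain F where F: "five_face F" "T \<in> interval (base F, F)"
    by (auto simp: in_five_interval_def)
  then have "base F \<subseteq> T" "card T = 3"
    using T by (auto simp: interval_def triangles_def)
  then have "base F = T"
    using base_subset[OF F(1)] card_subset_eq[OF finite \<open>base F \<subseteq> T\<close>] by simp
  then have "Q \<subseteq> F"
    using face_subset_five_face F Q T by (auto simp: five_face_def interval_def free_tetrahedra_def triangles_def)
  then show False
    using Q F \<open>base F = T\<close> T by (auto simp: free_tetrahedra_def in_five_interval_def interval_def triangles_def)
qed

lemma exists_matching:
  "\<exists>\<mu>. inj_on \<mu> free_tetrahedra \<and> (\<forall>Q\<in>free_tetrahedra. \<mu> Q \<in> triangles Q)"
proof (rule hall_marriage_degrees[where a = 4 and b = 2])
  show "\<forall>Q\<in>free_tetrahedra. 4 \<le> card (triangles Q)"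
    using card_triangles by (simp add: free_tetrahedra_def)
  show "\<forall>T. card {Q \<in> free_tetrahedra. T \<in> triangles Q} \<le> 2"
  proof
    fix T
    show "card {Q \<in> free_tetrahedra. T \<in> triangles Q} \<le> 2"
    proof (cases "\<exists>Q \<in> free_tetrahedra. T \<in> triangles Q")
      case True
      then have T: "face T" "card T = 3"
        using triangle_of_free_tetrahedron by blast+
      have "{Q \<in> free_tetrahedra. T \<in> triangles Q} \<subseteq> {Q. face Q \<and> card Q = 4 \<and> T \<subseteq> Q}"
        by (auto simp: free_tetrahedra_def triangles_def)
      then show ?thesis
        using card_tetrahedra_through_le_2[OF T] by (meson card_mono finite le_trans)
    next
      case False
      then have "{Q \<in> free_tetrahedra. T \<in> triangles Q} = {}"
        by blast
      then show ?thesis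
        by (metis card.empty le0)
    qed
  qed
qed auto

definition matching :: "'a set \<Rightarrow> 'a set" where
  "matching = (SOME \<mu>. inj_on \<mu> free_tetrahedra \<and> (\<forall>Q\<in>free_tetrahedra. \<mu> Q \<in> triangles Q))"

lemma matching:
  "inj_on matching free_tetrahedra" "\<And>Q. Q \<in> free_tetrahedra \<Longrightarrow> matching Q \<in> triangles Q"
  using someI_ex[OF exists_matching] unfolding matching_def by blast+

text \<open>The partition consists of the intervals [base F, F] for five-vertex faces F, the pairs
[matching Q, Q] for the remaining tetrahedra Q, and singletons; the faces left for singletons
have at most three vertices.\<close>
definition selector :: "'a set \<Rightarrow> 'a set \<times> 'a set" where
  "selector B =
    (if in_five_interval B then (base (five_face_of B), five_face_of B)
     else if B \<in> free_tetrahedra then (matching B, B)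
     else if B \<in> matching ` free_tetrahedra then (B, the_inv_into free_tetrahedra matching B)
     else (B, B))"

lemma matched_triangle:
  assumes "Q \<in> free_tetrahedra"
  shows "matching Q \<subseteq> Q" "face (matching Q)" "card (matching Q) = 3"
    "\<not> in_five_interval (matching Q)" "matching Q \<notin> free_tetrahedra"
proof -
  show "matching Q \<subseteq> Q" "card (matching Q) = 3"
    using matching(2)[OF assms] by (simp_all add: triangles_def)
  show "face (matching Q)" "\<not> in_five_interval (matching Q)"
    using triangle_of_free_tetrahedron[OF assms matching(2)[OF assms]] by simp_all
  then show "matching Q \<notin> free_tetrahedra"
    using \<open>card (matching Q) = 3\<close> by (simp add: free_tetrahedra_def)
qed

lemma selector_in_five_interval:
  "in_five_interval B \<Longrightarrow> selector B = (base (five_face_of B), five_face_of B)"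
  by (simp add: selector_def)

lemma selector_free_tetrahedron:
  "Q \<in> free_tetrahedra \<Longrightarrow> selector Q = (matching Q, Q)"
  by (simp add: selector_def free_tetrahedra_def)

lemma selector_matched_triangle:
  assumes "Q \<in> free_tetrahedra"
  shows "selector (matching Q) = (matching Q, Q)"
  using matched_triangle[OF assms] the_inv_into_f_f[OF matching(1) assms]
  by (simp add: selector_def assms)

lemma selector_interval:
  assumes "face B"
  shows "B \<in> interval (selector B) \<and> face (snd (selector B)) \<and> card (fst (selector B)) \<le> 3"
proof -
  consider "in_five_interval B" | "B \<in> free_tetrahedra"
    | Q where "Q \<in> free_tetrahedra" "B = matching Q"
    | "\<not> in_five_interval B" "B \<notin> free_tetrahedra" "B \<notin> matching ` free_tetrahedra"
    by blast
  then show ?thesis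
  proof cases
    case 1
    then show ?thesis
      using five_face_of[OF 1] base_subset
      by (simp add: selector_in_five_interval five_face_def)
  next
    case 2
    then show ?thesis
      using matched_triangle[OF 2]
      by (simp add: selector_free_tetrahedron interval_def free_tetrahedra_def)
  next
    case 3
    then show ?thesis
      using matched_triangle[OF 3(1)]
      by (simp add: selector_matched_triangle interval_def free_tetrahedra_def)
  next
    case 4
    have "card B \<noteq> 5"
    proof
      assume "card B = 5"
      then have "five_face B"
        using assms by (simp add: five_face_def)
      then show False
        using 4(1) base_subset by (auto simp: in_five_interval_def interval_def)
    qed
    moreover have "card B \<noteq> 4"
      using 4 assms by (auto simp: free_tetrahedra_def)
    ultimately have "card B \<le> 3"
      using card_face_le_5[OF assms] by linarith
    then show ?thesis
      using 4 assms by (simp add: selector_def interval_def)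
  qed
qed

lemma selector_constant:
  assumes "face B" and B': "B' \<in> interval (selector B)"
  shows "selector B' = selector B"
proof -
  consider "in_five_interval B" | "B \<in> free_tetrahedra"
    | Q where "Q \<in> free_tetrahedra" "B = matching Q"
    | "\<not> in_five_interval B" "B \<notin> free_tetrahedra" "B \<notin> matching ` free_tetrahedra"
    by blast
  then show ?thesis
  proof cases
    case 1
    then have F: "five_face (five_face_of B)" "B' \<in> interval (base (five_face_of B), five_face_of B)"
      using five_face_of B' by (auto simp: selector_in_five_interval)
    then have "in_five_interval B'"
      by (auto simp: in_five_interval_def)
    then show ?thesis
      using 1 five_face_of_eq[OF F] by (simp add: selector_in_five_interval)
  next
    case 2
    have "B' = matching B \<or> B' = B"
      using B' matched_triangle[OF 2] 2 subset_between_card_Suc[of "matching B" B' B]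
      by (auto simp: selector_free_tetrahedron interval_def free_tetrahedra_def)
    then show ?thesis
      using 2 by (auto simp: selector_matched_triangle selector_free_tetrahedron)
  next
    case 3
    have "B' = matching Q \<or> B' = Q"
      using B' matched_triangle[OF 3(1)] 3 subset_between_card_Suc[of "matching Q" B' Q]
      by (auto simp: selector_matched_triangle interval_def free_tetrahedra_def)
    then show ?thesis
      using 3 by (auto simp: selector_matched_triangle selector_free_tetrahedron)
  next
    case 4
    then show ?thesis
      using B' by (auto simp: selector_def interval_def)
  qed
qed

theorem interval_partition_card_le_3:
  "\<exists>P. interval_partition face P \<and> (\<forall>I\<in>P. card (fst I) \<le> 3)"
proof (intro exI conjI)
  show "interval_partition face (selector ` {B. face B})"
  proof (rule interval_partition_image)
    fix B assume "face B"
    then show "B \<in> interval (selector B) \<and> face (snd (selector B))"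
      using selector_interval by blast
  next
    fix B B' assume "face B" "B' \<in> interval (selector B)"
    then show "selector B' = selector B"
      by (rule selector_constant)
  qed
  show "\<forall>I\<in>selector ` {B. face B}. card (fst I) \<le> 3"
    using selector_interval by blast
qed

end

section \<open>Stanley decompositions of edge ideals\<close>

definition sqfree_exponent :: "'v set \<Rightarrow> ('v \<Rightarrow>\<^sub>0 nat)" where
  "sqfree_exponent U = (\<Sum>v\<in>U. Poly_Mapping.single v 1)"

lemma lookup_sqfree_exponent:
  "finite U \<Longrightarrow> Poly_Mapping.lookup (sqfree_exponent U) v = (if v \<in> U then 1 else 0)"
  by (simp add: sqfree_exponent_def lookup_sum lookup_single when_def)

lemma keys_sqfree_exponent: "finite U \<Longrightarrow> Poly_Mapping.keys (sqfree_exponent U) = U"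
  by (auto simp: in_keys_iff lookup_sqfree_exponent split: if_splits)

lemma sqfree_exponent_add_diff:
  assumes "finite U" "U \<subseteq> Poly_Mapping.keys m"
  shows "sqfree_exponent U + (m - sqfree_exponent U) = m"
  using assms by (intro poly_mapping_eqI) (auto simp: lookup_add lookup_minus lookup_sqfree_exponent in_keys_iff)

lemma keys_add_nat:
  "Poly_Mapping.keys (m + n :: 'v \<Rightarrow>\<^sub>0 nat) = Poly_Mapping.keys m \<union> Poly_Mapping.keys n"
  by (auto simp: in_keys_iff lookup_add)

lemma keys_diff_nat_subset:
  "Poly_Mapping.keys (m - n :: 'v \<Rightarrow>\<^sub>0 nat) \<subseteq> Poly_Mapping.keys m"
  by (auto simp: in_keys_iff lookup_minus)

lemma sqfree_mon_eq_single:
  "finite U \<Longrightarrow> (sqfree_mon U :: ('v, 'k::comm_ring_1) mpoly) = Poly_Mapping.single (sqfree_exponent U) 1"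
  by (induction U rule: finite_induct) (simp_all add: sqfree_mon_def sqfree_exponent_def var_def mult_single)

lemma sum_single_lookup:
  "(\<Sum>m\<in>Poly_Mapping.keys f. Poly_Mapping.single m (Poly_Mapping.lookup f m)) = f"
proof (rule poly_mapping_eqI)
  fix n
  have "(\<Sum>m\<in>Poly_Mapping.keys f. (Poly_Mapping.lookup f m when m = n)) = Poly_Mapping.lookup f n"
    by (simp add: when_def in_keys_iff)
  then show "Poly_Mapping.lookup (\<Sum>m\<in>Poly_Mapping.keys f. Poly_Mapping.single m (Poly_Mapping.lookup f m)) n =
      Poly_Mapping.lookup f n"
    by (simp add: lookup_sum lookup_single)
qed

lemma lookup_single_one_mult:
  fixes h :: "('v \<Rightarrow>\<^sub>0 nat) \<Rightarrow>\<^sub>0 'k::comm_ring_1"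
  shows "Poly_Mapping.lookup (Poly_Mapping.single k 1 * h) (k + m) = Poly_Mapping.lookup h m"
proof -
  have "Poly_Mapping.single k 1 * h =
      (\<Sum>m'\<in>Poly_Mapping.keys h. Poly_Mapping.single (k + m') (Poly_Mapping.lookup h m'))"
    by (subst (1) sum_single_lookup[of h, symmetric]) (simp add: sum_distrib_left mult_single)
  then have "Poly_Mapping.lookup (Poly_Mapping.single k 1 * h) (k + m) =
      (\<Sum>m'\<in>Poly_Mapping.keys h. if m' = m then Poly_Mapping.lookup h m' else 0)"
    by (simp add: lookup_sum lookup_single when_def)
  also have "\<dots> = Poly_Mapping.lookup h m"
    by (simp add: in_keys_iff)
  finally show ?thesis .
qed

lemma keys_single_one_mult:
  fixes h :: "('v \<Rightarrow>\<^sub>0 nat) \<Rightarrow>\<^sub>0 'k::comm_ring_1"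
  shows "Poly_Mapping.keys (Poly_Mapping.single k 1 * h) = (\<lambda>m. k + m) ` Poly_Mapping.keys h"
proof
  show "Poly_Mapping.keys (Poly_Mapping.single k 1 * h) \<subseteq> (\<lambda>m. k + m) ` Poly_Mapping.keys h"
    using keys_mult[of "Poly_Mapping.single k (1::'k)" h] by auto
  show "(\<lambda>m. k + m) ` Poly_Mapping.keys h \<subseteq> Poly_Mapping.keys (Poly_Mapping.single k 1 * h)"
    by (auto simp: in_keys_iff lookup_single_one_mult)
qed

lemma keys_sqfree_mon_mult:
  fixes h :: "('v, 'k::comm_ring_1) mpoly"
  assumes "finite U" "m \<in> Poly_Mapping.keys (sqfree_mon U * h)"
  obtains m' where "m' \<in> Poly_Mapping.keys h" "m = sqfree_exponent U + m'"
  using assms by (auto simp: sqfree_mon_eq_single keys_single_one_mult)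

lemma sqfree_mon_mult_eq_0_iff:
  fixes h :: "('v, 'k::comm_ring_1) mpoly"
  assumes "finite U"
  shows "sqfree_mon U * h = 0 \<longleftrightarrow> h = 0"
proof
  assume h: "sqfree_mon U * h = 0"
  show "h = 0"
  proof (rule poly_mapping_eqI)
    fix m
    show "Poly_Mapping.lookup h m = Poly_Mapping.lookup 0 m"
      using h lookup_single_one_mult[of "sqfree_exponent U" h m] assms
      by (simp add: sqfree_mon_eq_single)
  qed
qed simp

definition independent_set :: "'v set set \<Rightarrow> 'v set \<Rightarrow> bool" where
  "independent_set E S \<longleftrightarrow> (\<forall>e\<in>E. \<not> e \<subseteq> S)"

lemma not_independent_if_in_edge_ideal:
  assumes fin: "\<forall>e\<in>E. finite e"
    and p: "(p :: ('v, 'k::comm_ring_1) mpoly) \<in> edge_ideal E" and m: "m \<in> Poly_Mapping.keys p"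
  shows "\<not> independent_set E (Poly_Mapping.keys m)"
proof -
  obtain q where "p = (\<Sum>e\<in>E. q e * sqfree_mon e)"
    using p by (auto simp: edge_ideal_def)
  then obtain e where e: "e \<in> E" "m \<in> Poly_Mapping.keys (sqfree_mon e * q e)"
    using keys_sum[of "\<lambda>e. q e * sqfree_mon e" E] m by (auto simp: mult.commute)
  then obtain m' where "m = sqfree_exponent e + m'"
    using fin keys_sqfree_mon_mult by blast
  then have "e \<subseteq> Poly_Mapping.keys m"
    using fin e by (simp add: keys_add_nat keys_sqfree_exponent)
  then show ?thesis
    using e by (auto simp: independent_set_def)
qed

lemma in_edge_ideal_if_not_independent:
  assumes finE: "finite E" and fin: "\<forall>e\<in>E. finite e"
    and H: "\<forall>m\<in>Poly_Mapping.keys p. \<not> independent_set E (Poly_Mapping.keys m)"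
  shows "(p :: ('v, 'k::comm_ring_1) mpoly) \<in> edge_ideal E"
proof -
  define c where "c m = Poly_Mapping.lookup p m" for m
  define chosen_edge where "chosen_edge m = (SOME e. e \<in> E \<and> e \<subseteq> Poly_Mapping.keys m)" for m :: "'v \<Rightarrow>\<^sub>0 nat"
  have chosen_edge: "chosen_edge m \<in> E \<and> chosen_edge m \<subseteq> Poly_Mapping.keys m" if "m \<in> Poly_Mapping.keys p" for m
    unfolding chosen_edge_def by (rule someI_ex) (use H that in \<open>auto simp: independent_set_def\<close>)
  define q where "q e = (\<Sum>m\<in>Poly_Mapping.keys p.
      if chosen_edge m = e then Poly_Mapping.single (m - sqfree_exponent e) (c m) else 0)" for e
  have "q e * sqfree_mon e =
      (\<Sum>m\<in>Poly_Mapping.keys p. if chosen_edge m = e then Poly_Mapping.single m (c m) else 0)"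
    if e: "e \<in> E" for e
    unfolding q_def sum_distrib_right
  proof (rule sum.cong[OF refl])
    fix m assume "m \<in> Poly_Mapping.keys p"
    then show "(if chosen_edge m = e then Poly_Mapping.single (m - sqfree_exponent e) (c m) else 0) * sqfree_mon e =
        (if chosen_edge m = e then Poly_Mapping.single m (c m) else 0)"
      using sqfree_exponent_add_diff[of e m] chosen_edge fin e
      by (auto simp: sqfree_mon_eq_single mult_single add.commute)
  qed
  then have "(\<Sum>e\<in>E. q e * sqfree_mon e) =
      (\<Sum>e\<in>E. \<Sum>m\<in>Poly_Mapping.keys p. if chosen_edge m = e then Poly_Mapping.single m (c m) else 0)"
    by (rule sum.cong[OF refl])
  also have "\<dots> = (\<Sum>m\<in>Poly_Mapping.keys p. \<Sum>e\<in>E. if chosen_edge m = e then Poly_Mapping.single m (c m) else 0)"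
    by (rule sum.swap)
  also have "\<dots> = p"
    using chosen_edge finE sum_single_lookup[of p] by (simp add: sum.delta c_def)
  finally show ?thesis
    by (auto simp: edge_ideal_def)
qed

lemma edge_ideal_iff:
  assumes "finite E" "\<forall>e\<in>E. finite e"
  shows "(p :: ('v, 'k::comm_ring_1) mpoly) \<in> edge_ideal E \<longleftrightarrow>
    (\<forall>m\<in>Poly_Mapping.keys p. \<not> independent_set E (Poly_Mapping.keys m))"
  using not_independent_if_in_edge_ideal[OF assms(2)] in_edge_ideal_if_not_independent[OF assms] by blast

lemma independent_set_subset: "independent_set E B \<Longrightarrow> A \<subseteq> B \<Longrightarrow> independent_set E A"
  by (auto simp: independent_set_def)

lemma edge_ideal_iff_finite:
  "(p :: ('v::finite, 'k::comm_ring_1) mpoly) \<in> edge_ideal E \<longleftrightarrow>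
    (\<forall>m\<in>Poly_Mapping.keys p. \<not> independent_set E (Poly_Mapping.keys m))"
  by (rule edge_ideal_iff) simp_all

lemma keys_sqfree_mon_mult_in_interval:
  fixes h :: "('v::finite, 'k::comm_ring_1) mpoly"
  assumes "h \<in> subring_vars Z" "U \<subseteq> Z" "m \<in> Poly_Mapping.keys (sqfree_mon U * h)"
  shows "Poly_Mapping.keys m \<in> interval (U, Z)"
proof -
  obtain m' where "m' \<in> Poly_Mapping.keys h" "m = sqfree_exponent U + m'"
    using keys_sqfree_mon_mult[OF finite assms(3)] .
  then show ?thesis
    using assms(1,2) by (auto simp: keys_add_nat keys_sqfree_exponent subring_vars_def interval_def)
qed

locale interval_partition_list =
  fixes E :: "'v::finite set set" and ds :: "('v set \<times> 'v set) list"
  assumes partition: "interval_partition (independent_set E) (set ds)" and distinct: "distinct ds"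
begin

lemma nth_interval:
  assumes "i < length ds"
  shows "fst (ds ! i) \<subseteq> snd (ds ! i)" "independent_set E (snd (ds ! i))"
  using partition nth_mem[OF assms] by (auto simp: interval_partition_def)

lemma independent_if_in_interval:
  assumes "i < length ds" "S \<in> interval (ds ! i)"
  shows "independent_set E S"
  using independent_set_subset[OF nth_interval(2)[OF assms(1)]] assms(2) by (simp add: interval_def)

lemma index_unique:
  assumes "i < length ds" "j < length ds" "S \<in> interval (ds ! i)" "S \<in> interval (ds ! j)"
  shows "i = j"
proof -
  have "independent_set E S"
    using independent_if_in_interval assms(1,3) .
  then have "\<exists>!I. I \<in> set ds \<and> S \<in> interval I"
    using partition unfolding interval_partition_def by blast
  moreover have "ds ! i \<in> set ds \<and> S \<in> interval (ds ! i)" "ds ! j \<in> set ds \<and> S \<in> interval (ds ! j)"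
    using assms by simp_all
  ultimately have "ds ! i = ds ! j"
    by blast
  then show ?thesis
    using nth_eq_iff_index_eq[OF distinct assms(1,2)] by simp
qed

lemma sum_indicator:
  "(\<Sum>i<length ds. if S \<in> interval (ds ! i) then x else 0) = (if independent_set E S then x else 0)"
proof (cases "independent_set E S")
  case True
  then obtain I where "I \<in> set ds" "S \<in> interval I"
    using partition unfolding interval_partition_def by blast
  then obtain i0 where i0: "i0 < length ds" "S \<in> interval (ds ! i0)"
    by (auto simp: in_set_conv_nth)
  have "(\<Sum>i<length ds. if S \<in> interval (ds ! i) then x else 0) = (\<Sum>i<length ds. if i = i0 then x else 0)"
    using index_unique i0 by (intro sum.cong) auto
  then show ?thesis
    using True i0 by simp
next
  case False
  then show ?thesis
    using independent_if_in_interval by (intro trans[OF sum.neutral]) auto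
qed

lemma spans:
  fixes f :: "('v, 'k::field) mpoly"
  shows "\<exists>g. (\<forall>i<length ds. \<exists>h\<in>subring_vars (snd (ds ! i)). g i = sqfree_mon (fst (ds ! i)) * h) \<and>
             f - (\<Sum>i<length ds. g i) \<in> edge_ideal E"
proof (intro exI conjI allI impI)
  define c where "c m = Poly_Mapping.lookup f m" for m
  let ?in = "\<lambda>i m. Poly_Mapping.keys m \<in> interval (ds ! i)"
  define g where "g i = (\<Sum>m\<in>Poly_Mapping.keys f. if ?in i m then Poly_Mapping.single m (c m) else 0)" for i
  define h where "h i = (\<Sum>m\<in>Poly_Mapping.keys f.
      if ?in i m then Poly_Mapping.single (m - sqfree_exponent (fst (ds ! i))) (c m) else 0)" for i
  fix i assume "i < length ds"
  have "sqfree_mon (fst (ds ! i)) * h i = g i"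
    unfolding g_def h_def sum_distrib_left
    by (intro sum.cong refl)
      (auto simp: sqfree_mon_eq_single mult_single sqfree_exponent_add_diff interval_def)
  moreover have "h i \<in> subring_vars (snd (ds ! i))"
    using keys_sum[of _ "Poly_Mapping.keys f"] keys_diff_nat_subset
    unfolding subring_vars_def h_def by (fastforce simp: interval_def split: if_splits)
  ultimately show "\<exists>h\<in>subring_vars (snd (ds ! i)). g i = sqfree_mon (fst (ds ! i)) * h"
    by metis
next
  define c where "c m = Poly_Mapping.lookup f m" for m
  let ?in = "\<lambda>i m. Poly_Mapping.keys m \<in> interval (ds ! i)"
  let ?g = "\<lambda>i. (\<Sum>m\<in>Poly_Mapping.keys f. if ?in i m then Poly_Mapping.single m (c m) else 0)"
  have "(\<Sum>i<length ds. ?g i) = (\<Sum>m\<in>Poly_Mapping.keys f.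
      if independent_set E (Poly_Mapping.keys m) then Poly_Mapping.single m (c m) else 0)"
    by (subst sum.swap) (simp only: sum_indicator)
  moreover have "f = (\<Sum>m\<in>Poly_Mapping.keys f. Poly_Mapping.single m (c m))"
    using sum_single_lookup[of f] by (simp add: c_def)
  ultimately have "f - (\<Sum>i<length ds. ?g i) = (\<Sum>m\<in>Poly_Mapping.keys f. Poly_Mapping.single m (c m) -
      (if independent_set E (Poly_Mapping.keys m) then Poly_Mapping.single m (c m) else 0))"
    by (simp add: sum_subtractf)
  also have "\<dots> = (\<Sum>m\<in>Poly_Mapping.keys f.
      if independent_set E (Poly_Mapping.keys m) then 0 else Poly_Mapping.single m (c m))"
    by (intro sum.cong) auto
  finally have "f - (\<Sum>i<length ds. ?g i) = \<dots>" .
  moreover have "\<dots> \<in> edge_ideal E"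
    unfolding edge_ideal_iff_finite
    using keys_sum[of "\<lambda>m. if independent_set E (Poly_Mapping.keys m) then 0 else Poly_Mapping.single m (c m)"
        "Poly_Mapping.keys f"]
    by (auto split: if_splits)
  ultimately show "f - (\<Sum>i<length ds. ?g i) \<in> edge_ideal E"
    by simp
qed


lemma keys_summand_in_interval:
  fixes g :: "nat \<Rightarrow> ('v, 'k::comm_ring_1) mpoly"
  assumes "i < length ds" "h \<in> subring_vars (snd (ds ! i))" "g i = sqfree_mon (fst (ds ! i)) * h"
    and "m \<in> Poly_Mapping.keys (g i)"
  shows "Poly_Mapping.keys m \<in> interval (ds ! i)"
  using keys_sqfree_mon_mult_in_interval[OF assms(2) nth_interval(1)[OF assms(1)]] assms(3,4) by simp

text \<open>The summands have pairwise disjoint monomial supports, all of them independent, so a sum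
lying in I(E) forces every summand to vanish.\<close>
lemma sum_direct:
  fixes g :: "nat \<Rightarrow> ('v, 'k::field) mpoly"
  assumes summands: "\<forall>i<length ds. \<exists>h\<in>subring_vars (snd (ds ! i)). g i = sqfree_mon (fst (ds ! i)) * h"
    and sum: "(\<Sum>i<length ds. g i) \<in> edge_ideal E" and i: "i < length ds"
  shows "g i \<in> edge_ideal E"
proof -
  have in_interval: "Poly_Mapping.keys m \<in> interval (ds ! j)"
    if "j < length ds" "m \<in> Poly_Mapping.keys (g j)" for j m
    using summands keys_summand_in_interval that by blast
  have "g i = 0"
  proof (rule ccontr)
    assume "g i \<noteq> 0"
    then obtain m where m: "m \<in> Poly_Mapping.keys (g i)"
      by (metis all_not_in_conv keys_eq_empty)
    have "Poly_Mapping.lookup (g j) m = 0" if "j < length ds" "j \<noteq> i" for j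
      using in_interval[OF i m] in_interval[OF that(1)] index_unique[OF i that(1)] that(2)
      by (metis in_keys_iff)
    then have "(\<Sum>j<length ds. Poly_Mapping.lookup (g j) m) =
        (\<Sum>j<length ds. if j = i then Poly_Mapping.lookup (g i) m else 0)"
      by (intro sum.cong) auto
    then have "Poly_Mapping.lookup (\<Sum>j<length ds. g j) m = Poly_Mapping.lookup (g i) m"
      using i by (simp add: lookup_sum)
    then have "m \<in> Poly_Mapping.keys (\<Sum>j<length ds. g j)"
      using m by (simp add: in_keys_iff)
    then show False
      using sum independent_if_in_interval[OF i in_interval[OF i m]]
      by (simp add: edge_ideal_iff_finite)
  qed
  then show ?thesis
    by (simp add: edge_ideal_iff_finite)
qed

lemma summand_free:
  fixes h :: "('v, 'k::field) mpoly"
  assumes i: "i < length ds" and h: "h \<in> subring_vars (snd (ds ! i))"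
    and "sqfree_mon (fst (ds ! i)) * h \<in> edge_ideal E"
  shows "h = 0"
proof -
  have "Poly_Mapping.keys (sqfree_mon (fst (ds ! i)) * h) = {}"
  proof (rule ccontr)
    assume "Poly_Mapping.keys (sqfree_mon (fst (ds ! i)) * h) \<noteq> {}"
    then obtain m where m: "m \<in> Poly_Mapping.keys (sqfree_mon (fst (ds ! i)) * h)"
      by blast
    then have "independent_set E (Poly_Mapping.keys m)"
      using keys_sqfree_mon_mult_in_interval[OF h nth_interval(1)[OF i]] independent_if_in_interval[OF i]
      by simp
    then show False
      using assms(3) m by (simp add: edge_ideal_iff_finite)
  qed
  then have "sqfree_mon (fst (ds ! i)) * h = 0"
    by simp
  then show "h = 0"
    by (simp add: sqfree_mon_mult_eq_0_iff)
qed

theorem sq_stanley_decomp: "sq_stanley_decomp TYPE('k::field) E ds"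
  unfolding sq_stanley_decomp_def using nth_interval(1) spans sum_direct summand_free by blast

end

lemma sreg_le_if_interval_partition:
  fixes E :: "'v::finite set set"
  assumes "interval_partition (independent_set E) P" "\<forall>I\<in>P. card (fst I) \<le> r"
  shows "sreg TYPE('k::field) E \<le> r"
proof -
  obtain ds where ds: "set ds = P" "distinct ds"
    using finite_distinct_list[OF finite] by blast
  then interpret interval_partition_list E ds
    using assms(1) by unfold_locales simp_all
  have "sreg TYPE('k) E \<le> stanley_reg ds"
    unfolding sreg_def using sq_stanley_decomp by (intro Least_le) blast
  also have "stanley_reg ds \<le> r"
    using assms(2) ds(1) by (auto simp: stanley_reg_def)
  finally show ?thesis .
qed

lemma interval_partition_extend:
  assumes P: "interval_partition (\<lambda>S. S \<subseteq> V \<and> \<Delta> S) P"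
    and local: "\<And>S. \<Delta> S \<longleftrightarrow> \<Delta> (S \<inter> V)"
  shows "interval_partition \<Delta> ((\<lambda>I. (fst I, snd I \<union> - V)) ` P)"
  unfolding interval_partition_def
proof (rule conjI; intro ballI allI impI)
  fix J assume "J \<in> (\<lambda>I. (fst I, snd I \<union> - V)) ` P"
  then obtain I where I: "I \<in> P" "J = (fst I, snd I \<union> - V)"
    by blast
  then have "fst I \<subseteq> snd I" "snd I \<subseteq> V" "\<Delta> (snd I)"
    using P by (auto simp: interval_partition_def)
  moreover have "(snd I \<union> - V) \<inter> V = snd I"
    using \<open>snd I \<subseteq> V\<close> by blast
  ultimately show "fst J \<subseteq> snd J \<and> \<Delta> (snd J)"
    using I(2) local[of "snd I \<union> - V"] by auto
next
  fix S assume "\<Delta> S"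
  then have "S \<inter> V \<subseteq> V \<and> \<Delta> (S \<inter> V)"
    using local by blast
  then obtain I0 where I0: "I0 \<in> P" "S \<inter> V \<in> interval I0"
    and I0_unique: "\<And>I. I \<in> P \<Longrightarrow> S \<inter> V \<in> interval I \<Longrightarrow> I = I0"
    using P unfolding interval_partition_def by metis
  have lift: "S \<in> interval (fst I, snd I \<union> - V) \<longleftrightarrow> S \<inter> V \<in> interval I" if "I \<in> P" for I
  proof -
    have "fst I \<subseteq> V"
      using P that by (auto simp: interval_partition_def)
    then show ?thesis
      by (auto simp: interval_def)
  qed
  show "\<exists>!J\<in>(\<lambda>I. (fst I, snd I \<union> - V)) ` P. S \<in> interval J"
  proof (rule ex1I[of _ "(fst I0, snd I0 \<union> - V)"])
    show "(fst I0, snd I0 \<union> - V) \<in> (\<lambda>I. (fst I, snd I \<union> - V)) ` P \<and> S \<in> interval (fst I0, snd I0 \<union> - V)"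
      using I0 lift by blast
  next
    fix J assume "J \<in> (\<lambda>I. (fst I, snd I \<union> - V)) ` P \<and> S \<in> interval J"
    then show "J = (fst I0, snd I0 \<union> - V)"
      using I0_unique lift by blast
  qed
qed

lemma independent_set_inter:
  assumes "\<forall>e\<in>E. e \<subseteq> V"
  shows "independent_set E S \<longleftrightarrow> independent_set E (S \<inter> V)"
  using assms by (auto simp: independent_set_def)

text \<open>Three independent vertices with three common independent neighbours would form a
K_{3,3} in the complement.\<close>
lemma two_apex_independent_sets:
  fixes V :: "'v::finite set"
  assumes planar: "planar V (complement_edges V E)"
  shows "two_apex_complex (\<lambda>S. S \<subseteq> V \<and> independent_set E S)"
proof
  fix T assume T: "T \<subseteq> V \<and> independent_set E T" "card T = 3"
  let ?X = "{x. x \<notin> T \<and> insert x T \<subseteq> V \<and> independent_set E (insert x T)}"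
  show "card ?X \<le> 2"
  proof (rule ccontr)
    assume "\<not> card ?X \<le> 2"
    then have "3 \<le> card ?X"
      by linarith
    then obtain Y where Y: "Y \<subseteq> ?X" "card Y = 3"
      by (meson obtain_subset_with_card_n)
    have "Y \<subseteq> V" "T \<inter> Y = {}"
      using Y(1) by auto
    moreover have "{t, y} \<in> complement_edges V E" if "t \<in> T" "y \<in> Y" for t y
    proof -
      have "insert y T \<subseteq> V" "independent_set E (insert y T)" "y \<notin> T"
        using Y(1) that(2) by auto
      then have "t \<in> V" "y \<in> V" "t \<noteq> y" "{t, y} \<notin> E"
        using that(1) by (auto simp: independent_set_def)
      then show ?thesis
        unfolding complement_edges_def by blast
    qed
    ultimately show False
      using planar_no_K33[OF planar, of T Y] T Y(2) by blast
  qed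
qed (meson independent_set_subset subset_trans)

theorem corollary5p12:
  fixes V :: "'v::finite set" and E :: "'v set set"
  assumes "simple_graph V E"
    and "planar V (complement_edges V E)"
  shows "sreg TYPE('k::field) E \<le> 3"
proof -
  interpret two_apex_complex "\<lambda>S. S \<subseteq> V \<and> independent_set E S"
    using two_apex_independent_sets[OF assms(2)] .
  obtain P where P: "interval_partition (\<lambda>S. S \<subseteq> V \<and> independent_set E S) P"
    and small: "\<forall>I\<in>P. card (fst I) \<le> 3"
    using interval_partition_card_le_3 by blast
  have "\<forall>e\<in>E. e \<subseteq> V"
    using assms(1) by (simp add: simple_graph_def)
  then have "interval_partition (independent_set E) ((\<lambda>I. (fst I, snd I \<union> - V)) ` P)"
    by (intro interval_partition_extend[OF P] independent_set_inter)
  moreover have "\<forall>J\<in>(\<lambda>I. (fst I, snd I \<union> - V)) ` P. card (fst J) \<le> 3"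
    using small by auto
  ultimately show ?thesis
    by (rule sreg_le_if_interval_partition)
qed

end
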